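(* For every prime power $q$, the equation $M_q\!\left(\frac{q-1}{x(q+1)}\right)=\frac{1}{x(q+1)}$ has a unique solution $x=c_q$ with $x\ge 1$. Moreover $c_q>1$.
   Context: $H_q(x)=x\log_q(q-1)-x\log_q x-(1-x)\log_q(1-x)$ is the $q$-ary entropy and $M_q(\delta)=H_q\!\left(\frac1q\left(q-1-(q-2)\delta-2\sqrt{(q-1)\delta(1-\delta)}\right)\right)$. $M_q$ is continuous and strictly decreasing on $[0,1-1/q]$ with $M_q(0)=1$ and $M_q(1-1/q)=0$. *)

theory Defs
  imports Complex_Main "HOL-Computational_Algebra.Primes"
begin

text \<open>q-ary entropy. Note: in Isabelle ln 0 = 0, so log q 0 = 0 and the
  terms 0 * log q 0 vanish, matching the standard convention 0 log 0 = 0.\<close>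
definition Hq :: "nat \<Rightarrow> real \<Rightarrow> real" where
  "Hq q x = x * log (real q) (real q - 1) - x * log (real q) x
            - (1 - x) * log (real q) (1 - x)"

definition Mq :: "nat \<Rightarrow> real \<Rightarrow> real" where
  "Mq q \<delta> = Hq q ((real q - 1 - (real q - 2) * \<delta>
                     - 2 * sqrt ((real q - 1) * \<delta> * (1 - \<delta>))) / real q)"

definition prime_power :: "nat \<Rightarrow> bool" where
  "prime_power q \<longleftrightarrow> (\<exists>p k. prime p \<and> k \<ge> 1 \<and> q = p ^ k)"

end

theory Submission
  imports Defs "HOL-Analysis.Analysis"
begin

text \<open>Write \<open>M\<^sub>q(\<delta>) = H\<^sub>q(g(\<delta>))\<close> with
  \<open>g(\<delta>) = (\<surd>((q-1)(1-\<delta>)) - \<surd>\<delta>)\<^sup>2 / q\<close>. On \<open>[0, 1-1/q]\<close> the map \<open>g\<close> decreases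
  from \<open>1-1/q\<close>, where \<open>H\<^sub>q\<close> increases to its maximum 1; so \<open>M\<^sub>q\<close> is strictly decreasing there.
  For \<open>x \<ge> 1\<close> the point \<open>(q-1)/(x(q+1))\<close> stays in this range, hence
  \<open>x \<mapsto> M\<^sub>q((q-1)/(x(q+1))) - 1/(x(q+1))\<close> is continuous and strictly increasing on
  \<open>[1,\<infinity>)\<close>. It tends to \<open>M\<^sub>q(0) = 1\<close>, and it is negative at \<open>x = 1\<close>: there
  \<open>g = (q-1)/(q(q+1)(3+2\<surd>2))\<close> is so small that the crude estimate
  \<open>H\<^sub>q(y) \<le> y (ln(q-1) - ln y + 1) / ln q\<close> already gives \<open>M\<^sub>q < 1/(q+1)\<close>.
  The intermediate value theorem yields the unique root, which is not 1.\<close>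

lemma prime_power_ge_2:
  assumes "prime_power q"
  shows "q \<ge> 2"
proof -
  obtain p k where p: "prime p" "k \<ge> 1" "q = p ^ k"
    using assms unfolding prime_power_def by blast
  moreover have "p \<ge> 2"
    using p(1) by (rule prime_ge_2_nat)
  moreover have "p ^ 1 \<le> p ^ k"
    using \<open>p \<ge> 2\<close> p(2) by (intro power_increasing) auto
  ultimately show ?thesis
    using p(3) by simp
qed

lemma unique_zero_of_strict_mono_on:
  fixes f :: "real \<Rightarrow> real"
  assumes mono: "strict_mono_on {a..} f" and cont: "continuous_on {a..} f"
    and neg: "f a < 0" and pos: "eventually (\<lambda>x. 0 < f x) at_top"
  shows "\<exists>c>a. f c = 0 \<and> (\<forall>x\<ge>a. f x = 0 \<longrightarrow> x = c)"
proof -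
  obtain b where "a \<le> b" "0 < f b"
    using eventually_conj[OF eventually_ge_at_top[of a] pos]
    unfolding eventually_at_top_linorder by auto
  moreover have "continuous_on {a..b} f"
    using cont by (rule continuous_on_subset) auto
  ultimately obtain c where c: "a \<le> c" "f c = 0"
    using IVT'[of f a 0 b] neg by auto
  with neg have "a < c"
    by (cases "a = c") auto
  moreover have "x = c" if "a \<le> x" "f x = 0" for x
  proof (rule ccontr)
    assume "x \<noteq> c"
    then have "f x < f c \<or> f c < f x"
      using strict_mono_onD[OF mono, of x c] strict_mono_onD[OF mono, of c x] that c
      by (cases "x < c") auto
    with that c show False by simp
  qed
  ultimately show ?thesis
    using c by blast
qed

definition Mq_inner :: "nat \<Rightarrow> real \<Rightarrow> real" where
  "Mq_inner q \<delta> = (real q - 1 - (real q - 2) * \<delta> - 2 * sqrt ((real q - 1) * \<delta> * (1 - \<delta>))) / real q"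

lemma Mq_eq_Hq_Mq_inner: "Mq q \<delta> = Hq q (Mq_inner q \<delta>)"
  by (simp add: Mq_def Mq_inner_def)

lemma Mq_inner_0: "Mq_inner q 0 = (real q - 1) / real q"
  by (simp add: Mq_inner_def)

lemma isCont_Mq_inner: "isCont (Mq_inner q) \<delta>"
  unfolding Mq_inner_def divide_inverse by (intro continuous_intros)

lemma Mq_inner_eq_square:
  assumes "q \<ge> 1" "0 \<le> \<delta>" "\<delta> \<le> 1"
  shows "Mq_inner q \<delta> = (sqrt ((real q - 1) * (1 - \<delta>)) - sqrt \<delta>)\<^sup>2 / real q"
proof -
  have "sqrt ((real q - 1) * \<delta> * (1 - \<delta>)) = sqrt ((real q - 1) * (1 - \<delta>)) * sqrt \<delta>"
    by (simp add: real_sqrt_mult mult_ac)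
  moreover have "(sqrt ((real q - 1) * (1 - \<delta>)))\<^sup>2 = (real q - 1) * (1 - \<delta>)"
    using assms by simp
  ultimately show ?thesis
    using assms unfolding Mq_inner_def power2_diff by (simp add: algebra_simps)
qed

lemma Mq_inner_pos:
  assumes "q \<ge> 2" "0 \<le> \<delta>" "\<delta> < (real q - 1) / real q"
  shows "0 < Mq_inner q \<delta>"
proof -
  have "\<delta> < (real q - 1) * (1 - \<delta>)"
    using assms by (simp add: field_simps)
  then have "sqrt \<delta> < sqrt ((real q - 1) * (1 - \<delta>))"
    by simp
  moreover have "\<delta> \<le> 1"
    using assms(3) divide_le_eq_1[of "real q - 1" "real q"] by linarith
  ultimately show ?thesis
    using Mq_inner_eq_square[of q \<delta>] assms by simp
qed

lemma Mq_inner_strict_antimono: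
  assumes "q \<ge> 2" "0 \<le> \<delta>" "\<delta> < \<delta>'" "\<delta>' \<le> (real q - 1) / real q"
  shows "Mq_inner q \<delta>' < Mq_inner q \<delta>"
proof -
  have "\<delta>' \<le> (real q - 1) * (1 - \<delta>')"
    using assms by (simp add: field_simps)
  then have "sqrt \<delta>' \<le> sqrt ((real q - 1) * (1 - \<delta>'))"
    by simp
  moreover have "sqrt \<delta> < sqrt \<delta>'"
    using assms by simp
  moreover have "sqrt ((real q - 1) * (1 - \<delta>')) < sqrt ((real q - 1) * (1 - \<delta>))"
    using assms by simp
  ultimately have "0 \<le> sqrt ((real q - 1) * (1 - \<delta>')) - sqrt \<delta>'"
    and "sqrt ((real q - 1) * (1 - \<delta>')) - sqrt \<delta>' < sqrt ((real q - 1) * (1 - \<delta>)) - sqrt \<delta>"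
    by linarith+
  then have "(sqrt ((real q - 1) * (1 - \<delta>')) - sqrt \<delta>')\<^sup>2
      < (sqrt ((real q - 1) * (1 - \<delta>)) - sqrt \<delta>)\<^sup>2"
    by (auto intro: power_strict_mono)
  moreover have "\<delta>' \<le> 1"
    using assms(4) divide_le_eq_1[of "real q - 1" "real q"] by linarith
  ultimately show ?thesis
    using assms Mq_inner_eq_square[of q \<delta>] Mq_inner_eq_square[of q \<delta>']
    by (simp add: divide_strict_right_mono)
qed

lemma Hq_eq_ln:
  "Hq q x = (x * ln (real q - 1) - x * ln x - (1 - x) * ln (1 - x)) / ln (real q)"
  by (simp add: Hq_def log_def diff_divide_distrib)

lemma Hq_has_real_derivative:
  assumes "0 < x" "x < 1"
  shows "(Hq q has_real_derivative (ln (real q - 1) - ln x + ln (1 - x)) / ln (real q)) (at x)"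
proof -
  have "((\<lambda>x. x * ln (real q - 1) - x * ln x - (1 - x) * ln (1 - x))
      has_real_derivative ln (real q - 1) - ln x + ln (1 - x)) (at x)"
    using assms by (auto intro!: derivative_eq_intros)
  then show ?thesis
    unfolding Hq_eq_ln[abs_def] by (rule DERIV_cdivide)
qed

lemma isCont_Hq:
  assumes "0 < x" "x < 1"
  shows "isCont (Hq q) x"
  using assms by (rule Hq_has_real_derivative[THEN DERIV_isCont])

lemma Hq_strict_mono:
  assumes "q \<ge> 2" "0 < x" "x < y" "y < (real q - 1) / real q"
  shows "Hq q x < Hq q y"
proof (rule DERIV_pos_imp_increasing[OF \<open>x < y\<close>])
  fix t assume t: "x \<le> t" "t \<le> y"
  then have "0 < t" "t < (real q - 1) / real q"
    using assms by auto
  moreover have "(real q - 1) / real q < 1"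
    using assms(1) by simp
  ultimately have "t < 1"
    by linarith
  have "t < (real q - 1) * (1 - t)"
    using \<open>t < (real q - 1) / real q\<close> assms(1) by (simp add: field_simps)
  then have "ln t < ln ((real q - 1) * (1 - t))"
    using \<open>0 < t\<close> by simp
  also have "\<dots> = ln (real q - 1) + ln (1 - t)"
    using \<open>t < 1\<close> assms(1) by (simp add: ln_mult)
  finally have "ln t < ln (real q - 1) + ln (1 - t)" .
  then have "0 < (ln (real q - 1) - ln t + ln (1 - t)) / ln (real q)"
    using assms(1) by simp
  then show "\<exists>d. (Hq q has_real_derivative d) (at t) \<and> 0 < d"
    using Hq_has_real_derivative[OF \<open>0 < t\<close> \<open>t < 1\<close>] by blast
qed

lemma Hq_maximum:
  assumes "q \<ge> 2"
  shows "Hq q ((real q - 1) / real q) = 1"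
proof -
  have "1 - (real q - 1) / real q = 1 / real q"
    using assms by (simp add: field_simps)
  moreover have "ln ((real q - 1) / real q) = ln (real q - 1) - ln (real q)"
    using assms by (simp add: ln_div)
  moreover have "0 < ln (real q)"
    using assms by simp
  ultimately show ?thesis
    unfolding Hq_eq_ln using assms by (simp add: ln_div field_simps)
qed

lemma Mq_0:
  assumes "q \<ge> 2"
  shows "Mq q 0 = 1"
  using assms by (simp add: Mq_eq_Hq_Mq_inner Mq_inner_0 Hq_maximum)

lemma Mq_strict_antimono:
  assumes "q \<ge> 2" "0 < \<delta>" "\<delta> < \<delta>'" "\<delta>' < (real q - 1) / real q"
  shows "Mq q \<delta>' < Mq q \<delta>"
proof -
  have "Mq_inner q \<delta>' < Mq_inner q \<delta>" "Mq_inner q \<delta> < Mq_inner q 0"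
    using assms Mq_inner_strict_antimono[of q] by auto
  moreover have "0 < Mq_inner q \<delta>'"
    using assms by (intro Mq_inner_pos) auto
  ultimately show ?thesis
    unfolding Mq_eq_Hq_Mq_inner using assms by (intro Hq_strict_mono) (auto simp: Mq_inner_0)
qed

lemma isCont_Mq:
  assumes "q \<ge> 2" "0 \<le> \<delta>" "\<delta> < (real q - 1) / real q"
  shows "isCont (Mq q) \<delta>"
proof -
  have "Mq_inner q \<delta> \<le> Mq_inner q 0"
    using assms Mq_inner_strict_antimono[of q 0 \<delta>] by (cases "\<delta> = 0") auto
  also have "\<dots> = (real q - 1) / real q"
    by (rule Mq_inner_0)
  also have "\<dots> < 1"
    using assms by simp
  finally have "isCont (Hq q) (Mq_inner q \<delta>)"
    using assms by (intro isCont_Hq Mq_inner_pos)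
  then show ?thesis
    unfolding Mq_eq_Hq_Mq_inner[abs_def] by (intro isCont_o2[OF isCont_Mq_inner])
qed

lemma sqrt_2_bounds: "1.41 \<le> sqrt (2::real)" "sqrt (2::real) \<le> 1.5"
proof -
  have "sqrt (1.41\<^sup>2) \<le> sqrt (2::real)" "sqrt (2::real) \<le> sqrt (1.5\<^sup>2)"
    by (intro real_sqrt_le_mono; simp add: power2_eq_square)+
  then show "1.41 \<le> sqrt (2::real)" "sqrt (2::real) \<le> 1.5"
    by simp_all
qed

lemma ln_3_plus_2_sqrt_2_le: "ln (3 + 2 * sqrt 2) \<le> (2::real)"
proof -
  have "3 + 2 * sqrt 2 \<le> (1 + 2 / real 10 :: real) ^ 10"
    using sqrt_2_bounds by (simp add: power_divide)
  also have "\<dots> \<le> exp 2"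
    by (rule exp_ge_one_plus_x_over_n_power_n) simp_all
  finally have "ln (3 + 2 * sqrt 2) \<le> ln (exp (2::real))"
    by (subst ln_le_cancel_iff) (auto intro: add_pos_nonneg)
  then show ?thesis
    by simp
qed

lemma mult_ln_ge: "0 < x \<Longrightarrow> x - 1 \<le> x * ln (x::real)"
  using ln_le_minus_one[of "1 / x"] by (simp add: ln_div field_simps)

lemma Hq_upper_bound:
  assumes "q \<ge> 2" "0 < y" "y < 1"
  shows "Hq q y \<le> y * (ln (real q - 1) - ln y + 1) / ln (real q)"
proof -
  have "- y \<le> (1 - y) * ln (1 - y)"
    using mult_ln_ge[of "1 - y"] assms by simp
  then show ?thesis
    unfolding Hq_eq_ln using assms by (intro divide_right_mono) (auto simp: algebra_simps)
qed

lemma Mq_inner_at_ratio: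
  assumes "q \<ge> 2"
  shows "Mq_inner q ((real q - 1) / (real q + 1))
    = (real q - 1) * (3 - 2 * sqrt 2) / (real q * (real q + 1))"
proof -
  have "(real q - 1) * ((real q - 1) / (real q + 1)) * (1 - (real q - 1) / (real q + 1))
      = 2 * ((real q - 1) / (real q + 1))\<^sup>2"
    using assms by (simp add: field_simps power2_eq_square)
  then have "sqrt ((real q - 1) * ((real q - 1) / (real q + 1)) * (1 - (real q - 1) / (real q + 1)))
      = sqrt 2 * ((real q - 1) / (real q + 1))"
    using assms by (simp add: real_sqrt_mult)
  then show ?thesis
    unfolding Mq_inner_def using assms by (simp add: field_simps)
qed

lemma Mq_at_ratio_numeric_bound:
  fixes Q b :: real
  assumes "Q \<ge> 2" "b \<ge> 5.82"
  shows "(Q - 1) * (7/2 + 2 * ln Q) < Q * ln Q * b"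
proof (cases "Q \<le> 3")
  case True
  have "ln 2 \<le> ln Q"
    using assms(1) by simp
  with ln2_ge_two_thirds have "2/3 \<le> ln Q"
    by linarith
  have "(Q - 1) * (7/2 + 2 * ln Q) \<le> (2/3 * Q) * (7/2 + 2 * ln Q)"
    using True \<open>2/3 \<le> ln Q\<close> by (intro mult_right_mono) auto
  also have "\<dots> < Q * (ln Q * 5.82)"
    using assms \<open>2/3 \<le> ln Q\<close> by simp
  also have "\<dots> \<le> Q * ln Q * b"
    using assms \<open>2/3 \<le> ln Q\<close> by simp
  finally show ?thesis .
next
  case False
  have "ln 3 < ln Q"
    using False by simp
  with ln3_gt_1 have "1 < ln Q"
    by linarith
  have "(Q - 1) * (7/2 + 2 * ln Q) < Q * (7/2 + 2 * ln Q)"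
    using \<open>1 < ln Q\<close> by simp
  also have "\<dots> < Q * (ln Q * 5.82)"
    using assms \<open>1 < ln Q\<close> by simp
  also have "\<dots> \<le> Q * ln Q * b"
    using assms \<open>1 < ln Q\<close> by simp
  finally show ?thesis .
qed

lemma Mq_at_ratio_less:
  assumes "q \<ge> 2"
  shows "Mq q ((real q - 1) / (real q + 1)) < 1 / (real q + 1)"
proof -
  define Q where "Q = real q"
  define L where "L = ln Q"
  define b where "b = 3 + 2 * sqrt (2::real)"
  define y where "y = (Q - 1) / (Q * (Q + 1) * b)"
  have Q: "Q \<ge> 2" and L: "L > 0" and b: "b \<ge> 5.82"
    using assms sqrt_2_bounds by (auto simp: Q_def L_def b_def)
  have "(3 - 2 * sqrt 2) * b = 1"
    by (simp add: b_def algebra_simps)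
  then have "3 - 2 * sqrt 2 = 1 / b"
    using b by (simp add: eq_divide_eq)
  then have y_eq: "Mq_inner q ((Q - 1) / (Q + 1)) = y"
    using Mq_inner_at_ratio[OF assms] by (simp add: Q_def y_def mult_ac)
  have "1 * 1 \<le> (Q + 1) * b"
    using Q b by (intro mult_mono) auto
  then have "Q * 1 \<le> Q * ((Q + 1) * b)"
    using Q by (intro mult_left_mono) auto
  then have "Q - 1 < Q * (Q + 1) * b"
    by (simp add: mult_ac)
  then have y: "0 < y" "y < 1"
    using Q b by (auto simp: y_def)
  have "1 + 1 / Q = (Q + 1) / Q"
    using Q by (simp add: field_simps)
  then have "ln (Q + 1) - L = ln (1 + 1 / Q)"
    using Q by (simp add: L_def ln_div)
  also have "\<dots> \<le> 1 / Q"
    using Q by (intro ln_add_one_self_le_self) simp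
  also have "\<dots> \<le> 1 / 2"
    using Q by simp
  finally have log_bound: "ln (Q - 1) - ln y + 1 \<le> 2 * L + 7 / 2"
    using Q b ln_3_plus_2_sqrt_2_le by (simp add: y_def L_def b_def ln_div ln_mult)
  have "Mq q ((Q - 1) / (Q + 1)) = Hq q y"
    by (simp add: Mq_eq_Hq_Mq_inner y_eq)
  also have "\<dots> \<le> y * (ln (Q - 1) - ln y + 1) / L"
    using Hq_upper_bound[OF assms y] by (simp add: Q_def L_def)
  also have "\<dots> \<le> y * (2 * L + 7 / 2) / L"
    using log_bound y L
    by (intro divide_right_mono mult_left_mono) auto
  also have "\<dots> = (Q - 1) * (7 / 2 + 2 * L) / (Q * L * b * (Q + 1))"
    by (simp add: y_def mult_ac)
  also have "\<dots> < (Q * L * b) / (Q * L * b * (Q + 1))"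
    using Mq_at_ratio_numeric_bound[OF Q b] Q L b by (intro divide_strict_right_mono) (auto simp: L_def)
  also have "\<dots> = 1 / (Q + 1)"
    using Q L b by simp
  finally show ?thesis
    unfolding Q_def .
qed

definition Mq_gap :: "nat \<Rightarrow> real \<Rightarrow> real" where
  "Mq_gap q x = Mq q ((real q - 1) / (x * (real q + 1))) - 1 / (x * (real q + 1))"

lemma ratio_in_Mq_range:
  assumes "q \<ge> 2" "x \<ge> 1"
  shows "0 < (real q - 1) / (x * (real q + 1))" "(real q - 1) / (x * (real q + 1)) < (real q - 1) / real q"
proof -
  show "0 < (real q - 1) / (x * (real q + 1))"
    using assms by simp
  have "(real q - 1) / (x * (real q + 1)) \<le> (real q - 1) / (1 * (real q + 1))"
    using assms by (intro divide_left_mono mult_right_mono) auto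
  also have "\<dots> < (real q - 1) / real q"
    using assms by (intro divide_strict_left_mono) auto
  finally show "(real q - 1) / (x * (real q + 1)) < (real q - 1) / real q" .
qed

lemma strict_mono_on_Mq_gap:
  assumes "q \<ge> 2"
  shows "strict_mono_on {1..} (Mq_gap q)"
proof (rule strict_mono_onI)
  fix x x' :: real assume "x \<in> {1..}" "x' \<in> {1..}" "x < x'"
  then have x: "1 \<le> x" "x < x'"
    by auto
  then have "(real q - 1) / (x' * (real q + 1)) < (real q - 1) / (x * (real q + 1))"
    using assms by (intro divide_strict_left_mono mult_strict_right_mono) auto
  then have "Mq q ((real q - 1) / (x * (real q + 1))) < Mq q ((real q - 1) / (x' * (real q + 1)))"
    using assms x ratio_in_Mq_range[OF assms, of x] ratio_in_Mq_range[OF assms, of x']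
    by (intro Mq_strict_antimono) auto
  moreover have "1 / (x' * (real q + 1)) < 1 / (x * (real q + 1))"
    using assms x by (intro divide_strict_left_mono mult_strict_right_mono) auto
  ultimately show "Mq_gap q x < Mq_gap q x'"
    unfolding Mq_gap_def by linarith
qed

lemma continuous_on_Mq_gap:
  assumes "q \<ge> 2"
  shows "continuous_on {1..} (Mq_gap q)"
proof (intro continuous_at_imp_continuous_on ballI)
  fix x :: real assume "x \<in> {1..}"
  then have x: "x \<ge> 1"
    by simp
  have "isCont (\<lambda>x. (real q - 1) / (x * (real q + 1))) x"
    using x by (auto intro!: continuous_intros)
  moreover have "isCont (Mq q) ((real q - 1) / (x * (real q + 1)))"
    using ratio_in_Mq_range[OF assms x] assms by (intro isCont_Mq) auto
  ultimately have "isCont (\<lambda>x. Mq q ((real q - 1) / (x * (real q + 1)))) x"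
    by (rule isCont_o2)
  then show "isCont (Mq_gap q) x"
    unfolding Mq_gap_def[abs_def] using x by (auto intro!: continuous_intros)
qed

lemma Mq_gap_tendsto_1:
  assumes "q \<ge> 2"
  shows "(Mq_gap q \<longlongrightarrow> 1) at_top"
proof -
  have inverse_tendsto_0: "((\<lambda>x. c / (x * (real q + 1))) \<longlongrightarrow> 0) at_top" for c
  proof -
    have "((\<lambda>x. c / (real q + 1) * inverse x) \<longlongrightarrow> c / (real q + 1) * 0) at_top"
      by (intro tendsto_intros tendsto_inverse_0_at_top filterlim_ident)
    then show ?thesis
      by (simp add: divide_inverse mult_ac)
  qed
  have "isCont (Mq q) 0"
    using assms by (intro isCont_Mq) auto
  from isCont_tendsto_compose[OF this inverse_tendsto_0]
  have "((\<lambda>x. Mq q ((real q - 1) / (x * (real q + 1)))) \<longlongrightarrow> 1) at_top"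
    using Mq_0[OF assms] by simp
  from tendsto_diff[OF this inverse_tendsto_0[of 1]] show ?thesis
    unfolding Mq_gap_def[abs_def] by simp
qed

theorem corollaryA2:
  fixes q :: nat
  assumes "prime_power q"
  shows "\<exists>c::real. c > 1
           \<and> Mq q ((real q - 1) / (c * (real q + 1))) = 1 / (c * (real q + 1))
           \<and> (\<forall>x::real. x \<ge> 1 \<and> Mq q ((real q - 1) / (x * (real q + 1))) = 1 / (x * (real q + 1))
                  \<longrightarrow> x = c)"
proof -
  have q: "q \<ge> 2"
    using assms by (rule prime_power_ge_2)
  have "Mq_gap q 1 < 0"
    using Mq_at_ratio_less[OF q] by (simp add: Mq_gap_def)
  moreover have "eventually (\<lambda>x. 0 < Mq_gap q x) at_top"
    using Mq_gap_tendsto_1[OF q] by (rule order_tendstoD) simp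
  ultimately have "\<exists>c>1. Mq_gap q c = 0 \<and> (\<forall>x\<ge>1. Mq_gap q x = 0 \<longrightarrow> x = c)"
    using q by (intro unique_zero_of_strict_mono_on strict_mono_on_Mq_gap continuous_on_Mq_gap)
  then show ?thesis
    unfolding Mq_gap_def by auto
qed

end
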